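(* Let $\mathfrak A$ and $\mathcal A$ be Banach algebras with $\mathcal A$ a Banach $\mathfrak A$-module with compatible actions, where $\mathfrak A$ acts trivially on $\mathcal A$ from the left, and suppose $\mathcal A/\mathcal J$ has a right bounded approximate identity. Then $\mathcal A/\mathcal J$ (as a Banach $\mathfrak A$-module) is module pseudo-amenable if and only if it is pseudo-amenable.
   Context: Compatible actions: $\alpha\cdot(ab)=(\alpha\cdot a)b$, $(ab)\cdot\alpha=a(b\cdot\alpha)$. $\mathfrak A$ acts trivially from the left if there is a continuous linear functional $f$ on $\mathfrak A$ with $\alpha\cdot a=f(\alpha)a$ for all $\alpha\in\mathfrak A,a\in\mathcal A$. $\mathcal J$ is the closed ideal of $\mathcal A$ generated by $\{(a\cdot\alpha)b-a(\alpha\cdot b):a,b\in\mathcal A,\alpha\in\mathfrak A\}$. For a Banach algebra $\mathcal C$ that is a Banach $\mathfrak A$-module with compatible actions: $\mathcal I_{\mathcal C}$ is the closed span of $\{c\cdot\alpha\otimes d-c\otimes\alpha\cdot d\}$ in $\mathcal C\widehat\otimes\mathcal C$, $\mathcal C\widehat\otimes_{\mathfrak A}\mathcal C=(\mathcal C\widehat\otimes\mathcal C)/\mathcal I_{\mathcal C}$, $\mathcal J_{\mathcal C}$ is the closed ideal of $\mathcal C$ generated by $\{(c\cdot\alpha)d-c(\alpha\cdot d)\}$, $\widetilde\omega_{\mathcal C}(c\otimes d+\mathcal I_{\mathcal C})=cd+\mathcal J_{\mathcal C}$; $\mathcal C$ is module pseudo-amenable if there is a net $(\widetilde u_j)\subseteq\mathcal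 C\widehat\otimes_{\mathfrak A}\mathcal C$ with $(\widetilde\omega_{\mathcal C}(\widetilde u_j))$ an approximate identity of $\mathcal C/\mathcal J_{\mathcal C}$ and $c\cdot\widetilde u_j-\widetilde u_j\cdot c\to0$ for all $c\in\mathcal C$. A Banach algebra $\mathcal C$ is pseudo-amenable if there is a net $(u_j)\subseteq\mathcal C\widehat\otimes\mathcal C$ with $c\cdot u_j-u_j\cdot c\to0$ and $\omega_{\mathcal C}(u_j)c\to c$ for all $c\in\mathcal C$, where $\omega_{\mathcal C}(c\otimes d)=cd$. *)

theory Defs
  imports "HOL-Analysis.Analysis"
begin

class cbanach_algebra = real_normed_algebra + banach +
  fixes cscale :: "complex \<Rightarrow> 'a \<Rightarrow> 'a"
  assumes cscale_add_right: "cscale c (x + y) = cscale c x + cscale c y"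
    and cscale_add_left: "cscale (b + c) x = cscale b x + cscale c x"
    and cscale_cscale: "cscale b (cscale c x) = cscale (b * c) x"
    and cscale_one: "cscale 1 x = x"
    and cscale_of_real: "cscale (complex_of_real r) x = scaleR r x"
    and norm_cscale: "norm (cscale c x) = cmod c * norm x"
    and mult_cscale_left: "cscale c x * y = cscale c (x * y)"
    and mult_cscale_right: "x * cscale c y = cscale c (x * y)"

definition c_linear :: "('a::cbanach_algebra \<Rightarrow> 'b::cbanach_algebra) \<Rightarrow> bool" where
  "c_linear f \<longleftrightarrow> (\<forall>x y. f (x + y) = f x + f y) \<and> (\<forall>c x. f (cscale c x) = cscale c (f x))"

definition c_functional :: "('a::cbanach_algebra \<Rightarrow> complex) \<Rightarrow> bool" where
  "c_functional f \<longleftrightarrow> (\<forall>x y. f (x + y) = f x + f y) \<and> (\<forall>c x. f (cscale c x) = c * f x)"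

definition banach_module ::
  "('m::cbanach_algebra \<Rightarrow> 'a::cbanach_algebra \<Rightarrow> 'a) \<Rightarrow> ('a \<Rightarrow> 'm \<Rightarrow> 'a) \<Rightarrow> bool" where
  "banach_module la ra \<longleftrightarrow>
     (\<forall>\<alpha>. c_linear (la \<alpha>)) \<and> (\<forall>a. c_linear (\<lambda>\<alpha>. la \<alpha> a)) \<and>
     (\<forall>\<alpha>. c_linear (\<lambda>a. ra a \<alpha>)) \<and> (\<forall>a. c_linear (ra a)) \<and>
     (\<exists>K. \<forall>\<alpha> a. norm (la \<alpha> a) \<le> K * norm \<alpha> * norm a) \<and>
     (\<exists>K. \<forall>a \<alpha>. norm (ra a \<alpha>) \<le> K * norm a * norm \<alpha>) \<and>
     (\<forall>\<alpha> \<beta> a. la (\<alpha> * \<beta>) a = la \<alpha> (la \<beta> a)) \<and>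
     (\<forall>a \<alpha> \<beta>. ra a (\<alpha> * \<beta>) = ra (ra a \<alpha>) \<beta>) \<and>
     (\<forall>\<alpha> a \<beta>. ra (la \<alpha> a) \<beta> = la \<alpha> (ra a \<beta>))"

definition compatible_actions ::
  "('m::cbanach_algebra \<Rightarrow> 'a::cbanach_algebra \<Rightarrow> 'a) \<Rightarrow> ('a \<Rightarrow> 'm \<Rightarrow> 'a) \<Rightarrow> bool" where
  "compatible_actions la ra \<longleftrightarrow>
     (\<forall>\<alpha> a b. la \<alpha> (a * b) = la \<alpha> a * b) \<and> (\<forall>a b \<alpha>. ra (a * b) \<alpha> = a * ra b \<alpha>)"

definition acts_trivially_left :: "('m::cbanach_algebra \<Rightarrow> 'a::cbanach_algebra \<Rightarrow> 'a) \<Rightarrow> bool" where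
  "acts_trivially_left la \<longleftrightarrow>
     (\<exists>f. c_functional f \<and> (\<exists>K. \<forall>\<alpha>. cmod (f \<alpha>) \<le> K * norm \<alpha>) \<and>
          (\<forall>\<alpha> a. la \<alpha> a = cscale (f \<alpha>) a))"

definition closed_ideal :: "'a::cbanach_algebra set \<Rightarrow> bool" where
  "closed_ideal I \<longleftrightarrow> 0 \<in> I \<and> (\<forall>x\<in>I. \<forall>y\<in>I. x + y \<in> I) \<and> (\<forall>c. \<forall>x\<in>I. cscale c x \<in> I) \<and>
     (\<forall>a. \<forall>x\<in>I. a * x \<in> I \<and> x * a \<in> I) \<and> closed I"

definition gen_closed_ideal :: "'a::cbanach_algebra set \<Rightarrow> 'a set" where
  "gen_closed_ideal S = \<Inter>{I. closed_ideal I \<and> S \<subseteq> I}"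

definition module_ideal ::
  "('m::cbanach_algebra \<Rightarrow> 'a::cbanach_algebra \<Rightarrow> 'a) \<Rightarrow> ('a \<Rightarrow> 'm \<Rightarrow> 'a) \<Rightarrow> 'a set" where
  "module_ideal la ra = gen_closed_ideal {ra a \<alpha> * b - a * la \<alpha> b | a b \<alpha>. True}"

text \<open>q :: 'a => 'c presents 'c as the quotient Banach algebra 'a / J:
 q is a surjective complex-linear algebra homomorphism and the norm on 'c is
 the quotient norm. (Then ker q = J for closed J, and q induces an isometric
 algebra isomorphism 'a/J = 'c.)\<close>
definition quotient_by :: "'a::cbanach_algebra set \<Rightarrow> ('a \<Rightarrow> 'c::cbanach_algebra) \<Rightarrow> bool" where
  "quotient_by J q \<longleftrightarrow> c_linear q \<and> (\<forall>a b. q (a * b) = q a * q b) \<and> surj q \<and>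
     (\<forall>a. norm (q a) = infdist a J)"

definition has_right_bai :: "'c::cbanach_algebra itself \<Rightarrow> bool" where
  "has_right_bai _ \<longleftrightarrow> (\<exists>F :: 'c filter. F \<noteq> bot \<and> (\<exists>K. \<forall>\<^sub>F e in F. norm e \<le> K) \<and>
      (\<forall>x. ((\<lambda>e. x * e) \<longlongrightarrow> x) F))"

text \<open>An element of C \<otimes> C is represented by a series sum a_n (x) b_n with
 sum ||a_n|| ||b_n|| < infinity; it is identified with its action on bounded
 bilinear forms (the dual of the projective tensor product).\<close>

definition bbil :: "('c::cbanach_algebra \<Rightarrow> 'c \<Rightarrow> complex) \<Rightarrow> bool" where
  "bbil \<phi> \<longleftrightarrow> (\<forall>y. c_functional (\<lambda>x. \<phi> x y)) \<and> (\<forall>x. c_functional (\<phi> x)) \<and>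
     (\<exists>K. \<forall>x y. cmod (\<phi> x y) \<le> K * norm x * norm y)"

definition trep :: "(nat \<Rightarrow> 'c::cbanach_algebra \<times> 'c) \<Rightarrow> bool" where
  "trep u \<longleftrightarrow> summable (\<lambda>n. norm (fst (u n)) * norm (snd (u n)))"

type_synonym 'c tensor = "('c \<Rightarrow> 'c \<Rightarrow> complex) \<Rightarrow> complex"

definition tau :: "(nat \<Rightarrow> 'c::cbanach_algebra \<times> 'c) \<Rightarrow> 'c tensor" where
  "tau u = (\<lambda>\<phi>. if bbil \<phi> then (\<Sum>n. \<phi> (fst (u n)) (snd (u n))) else 0)"

definition tensor_set :: "'c::cbanach_algebra tensor set" where
  "tensor_set = {tau u | u. trep u}"

definition projnorm :: "'c::cbanach_algebra tensor \<Rightarrow> real" where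
  "projnorm t = Inf {(\<Sum>n. norm (fst (u n)) * norm (snd (u n))) | u. trep u \<and> tau u = t}"

definition tsingle :: "'c::cbanach_algebra \<Rightarrow> 'c \<Rightarrow> nat \<Rightarrow> 'c \<times> 'c" where
  "tsingle x y = (\<lambda>n. if n = 0 then (x, y) else (0, 0))"

definition tlmul :: "'c::cbanach_algebra \<Rightarrow> (nat \<Rightarrow> 'c \<times> 'c) \<Rightarrow> nat \<Rightarrow> 'c \<times> 'c" where
  "tlmul c u = (\<lambda>n. (c * fst (u n), snd (u n)))"

definition trmul :: "(nat \<Rightarrow> 'c::cbanach_algebra \<times> 'c) \<Rightarrow> 'c \<Rightarrow> nat \<Rightarrow> 'c \<times> 'c" where
  "trmul u c = (\<lambda>n. (fst (u n), snd (u n) * c))"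

definition tomega :: "(nat \<Rightarrow> 'c::cbanach_algebra \<times> 'c) \<Rightarrow> 'c" where
  "tomega u = (\<Sum>n. fst (u n) * snd (u n))"

definition tdiff :: "'c tensor \<Rightarrow> 'c tensor \<Rightarrow> 'c tensor" where
  "tdiff s t = (\<lambda>\<phi>. s \<phi> - t \<phi>)"

definition closed_tsubspace :: "'c::cbanach_algebra tensor set \<Rightarrow> bool" where
  "closed_tsubspace M \<longleftrightarrow> M \<subseteq> tensor_set \<and> (\<lambda>\<phi>. 0) \<in> M \<and> (\<forall>x\<in>M. \<forall>y\<in>M. (\<lambda>\<phi>. x \<phi> + y \<phi>) \<in> M) \<and>
     (\<forall>c. \<forall>x\<in>M. (\<lambda>\<phi>. c * x \<phi>) \<in> M) \<and>
     (\<forall>t\<in>tensor_set. (\<forall>\<epsilon>>0. \<exists>m\<in>M. projnorm (tdiff t m) < \<epsilon>) \<longrightarrow> t \<in> M)"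

definition closed_tspan :: "'c::cbanach_algebra tensor set \<Rightarrow> 'c tensor set" where
  "closed_tspan S = \<Inter>{M. closed_tsubspace M \<and> S \<subseteq> M}"

definition tqnorm :: "'c::cbanach_algebra tensor set \<Rightarrow> 'c tensor \<Rightarrow> real" where
  "tqnorm I t = Inf {projnorm (tdiff t s) | s. s \<in> I}"

text \<open>Nets are rendered as proper filters on the space of representatives
 (a net (u_j) corresponds to its image filter).\<close>

definition pseudo_amenable :: "'c::cbanach_algebra itself \<Rightarrow> bool" where
  "pseudo_amenable _ \<longleftrightarrow>
     (\<exists>F :: (nat \<Rightarrow> 'c \<times> 'c) filter. F \<noteq> bot \<and> (\<forall>\<^sub>F u in F. trep u) \<and>
        (\<forall>c. ((\<lambda>u. projnorm (tdiff (tau (tlmul c u)) (tau (trmul u c)))) \<longlongrightarrow> 0) F) \<and>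
        (\<forall>c. ((\<lambda>u. tomega u * c) \<longlongrightarrow> c) F))"

definition module_pseudo_amenable ::
  "('m::cbanach_algebra \<Rightarrow> 'c::cbanach_algebra \<Rightarrow> 'c) \<Rightarrow> ('c \<Rightarrow> 'm \<Rightarrow> 'c) \<Rightarrow> bool" where
  "module_pseudo_amenable la ra \<longleftrightarrow>
     (let JC = module_ideal la ra;
          IC = closed_tspan {tdiff (tau (tsingle (ra c \<alpha>) d)) (tau (tsingle c (la \<alpha> d))) | c d \<alpha>. True}
      in \<exists>F :: (nat \<Rightarrow> 'c \<times> 'c) filter. F \<noteq> bot \<and> (\<forall>\<^sub>F u in F. trep u) \<and>
          (\<forall>x. ((\<lambda>u. infdist (tomega u * x - x) JC) \<longlongrightarrow> 0) F) \<and>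
          (\<forall>x. ((\<lambda>u. infdist (x * tomega u - x) JC) \<longlongrightarrow> 0) F) \<and>
          (\<forall>c. ((\<lambda>u. tqnorm IC (tdiff (tau (tlmul c u)) (tau (trmul u c)))) \<longlongrightarrow> 0) F))"

end

theory Submission
  imports Defs
begin

text \<open>Since \<open>\<AA>\<close> acts on \<open>\<A>\<close> from the left through a character \<open>f\<close>, the generators
  \<open>(a \<cdot> \<alpha>) b - a (\<alpha> \<cdot> b)\<close> of \<open>\<J>\<close> read \<open>(a \<cdot> \<alpha>) b - f(\<alpha>) a b\<close>; so in \<open>\<A>/\<J>\<close> we have
  \<open>(c \<cdot> \<alpha>) d = f(\<alpha>) c d\<close>, and cancelling \<open>d\<close> against the right bounded approximate identity
  gives \<open>c \<cdot> \<alpha> = f(\<alpha>) c\<close>. Both actions on \<open>\<A>/\<J>\<close> are therefore multiplication by the scalar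
  \<open>f(\<alpha>)\<close>, whence \<open>\<J>\<^sub>C = 0\<close> and \<open>\<I>\<^sub>C = 0\<close>: module pseudo-amenability of \<open>\<A>/\<J>\<close> then asks for
  a net \<open>(u\<^sub>j)\<close> with \<open>c \<cdot> u\<^sub>j - u\<^sub>j \<cdot> c \<rightarrow> 0\<close> and \<open>\<omega>(u\<^sub>j)\<close> a two-sided approximate identity,
  whereas pseudo-amenability only asks for a left one. The right half is automatic, since
  \<open>\<parallel>c \<omega>(u) - \<omega>(u) c\<parallel> \<le> \<parallel>c \<cdot> u - u \<cdot> c\<parallel>\<close>. This last inequality says that \<open>\<omega>\<close> is well defined
  and contractive on the projective tensor product; as tensors are modelled by their pairings
  with bounded bilinear forms, it rests on the Hahn--Banach theorem, through the forms
  \<open>(a, b) \<mapsto> g (a b)\<close> with \<open>g\<close> a bounded functional.\<close>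

section \<open>The Hahn--Banach theorem\<close>

definition dominated_linear_graph :: "('a::real_normed_vector \<times> real) set \<Rightarrow> bool" where
  "dominated_linear_graph G \<longleftrightarrow>
     (\<forall>x a b. (x, a) \<in> G \<longrightarrow> (x, b) \<in> G \<longrightarrow> a = b) \<and>
     (\<forall>x y a b. (x, a) \<in> G \<longrightarrow> (y, b) \<in> G \<longrightarrow> (x + y, a + b) \<in> G) \<and>
     (\<forall>x a c. (x, a) \<in> G \<longrightarrow> (c *\<^sub>R x, c * a) \<in> G) \<and>
     (\<forall>x a. (x, a) \<in> G \<longrightarrow> a \<le> norm x)"

lemma dominated_linear_graphD:
  assumes "dominated_linear_graph G"
  shows dominated_linear_graph_unique: "\<And>x a b. (x, a) \<in> G \<Longrightarrow> (x, b) \<in> G \<Longrightarrow> a = b"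
    and dominated_linear_graph_add: "\<And>x y a b. (x, a) \<in> G \<Longrightarrow> (y, b) \<in> G \<Longrightarrow> (x + y, a + b) \<in> G"
    and dominated_linear_graph_scaleR: "\<And>x a c. (x, a) \<in> G \<Longrightarrow> (c *\<^sub>R x, c * a) \<in> G"
    and dominated_linear_graph_le_norm: "\<And>x a. (x, a) \<in> G \<Longrightarrow> a \<le> norm x"
  using assms unfolding dominated_linear_graph_def by blast+

text \<open>A graph extends to a new point \<open>x1\<close> with value \<open>\<xi>\<close> as soon as \<open>\<xi>\<close> lies between the
  bounds below; these bounds are compatible by the triangle inequality.\<close>

lemma dominated_linear_graph_extension_le_norm:
  assumes G: "dominated_linear_graph G" and da: "(d, a) \<in> G"
    and lower: "\<And>d a. (d, a) \<in> G \<Longrightarrow> a - norm (d - x1) \<le> \<xi>"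
    and upper: "\<And>e b. (e, b) \<in> G \<Longrightarrow> \<xi> \<le> norm (e + x1) - b"
  shows "a + t * \<xi> \<le> norm (d + t *\<^sub>R x1)"
proof (cases t "0 :: real" rule: linorder_cases)
  case equal
  then show ?thesis using dominated_linear_graph_le_norm[OF G da] by simp
next
  case greater
  have "\<xi> \<le> norm ((1 / t) *\<^sub>R d + x1) - (1 / t) * a"
    by (rule upper[OF dominated_linear_graph_scaleR[OF G da]])
  then have "t * \<xi> \<le> t * norm ((1 / t) *\<^sub>R d + x1) - a"
    using greater by (simp add: field_simps)
  also have "t * norm ((1 / t) *\<^sub>R d + x1) = norm (t *\<^sub>R ((1 / t) *\<^sub>R d + x1))"
    using greater by simp
  also have "t *\<^sub>R ((1 / t) *\<^sub>R d + x1) = d + t *\<^sub>R x1"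
    using greater by (simp add: algebra_simps)
  finally show ?thesis by simp
next
  case less
  have "(1 / -t) * a - norm ((1 / -t) *\<^sub>R d - x1) \<le> \<xi>"
    by (rule lower[OF dominated_linear_graph_scaleR[OF G da]])
  then have "a - (-t) * norm ((1 / -t) *\<^sub>R d - x1) \<le> (-t) * \<xi>"
    using less by (simp add: field_simps)
  also have "(-t) * norm ((1 / -t) *\<^sub>R d - x1) = norm ((-t) *\<^sub>R ((1 / -t) *\<^sub>R d - x1))"
    using less by simp
  also have "(-t) *\<^sub>R ((1 / -t) *\<^sub>R d - x1) = d + t *\<^sub>R x1"
    using less by (simp add: algebra_simps)
  finally show ?thesis by simp
qed

lemma dominated_linear_graph_coeff_unique:
  assumes G: "dominated_linear_graph G" and x1: "x1 \<notin> fst ` G"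
    and "(d1, a1) \<in> G" "(d2, a2) \<in> G" "d1 + t1 *\<^sub>R x1 = d2 + t2 *\<^sub>R x1"
  shows "t1 = t2"
proof (rule ccontr)
  assume "t1 \<noteq> t2"
  have "(d2 + (-1) *\<^sub>R d1, a2 + (-1) * a1) \<in> G"
    using G assms(3,4) by (blast intro: dominated_linear_graph_add dominated_linear_graph_scaleR)
  then have "(d2 - d1, a2 - a1) \<in> G" by simp
  from dominated_linear_graph_scaleR[OF G this, of "1 / (t1 - t2)"]
  have "((1 / (t1 - t2)) *\<^sub>R (d2 - d1), (1 / (t1 - t2)) * (a2 - a1)) \<in> G" .
  moreover have "d2 - d1 = (t1 - t2) *\<^sub>R x1"
    using assms(5) by (simp add: algebra_simps)
  then have "(1 / (t1 - t2)) *\<^sub>R (d2 - d1) = x1"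
    using \<open>t1 \<noteq> t2\<close> by simp
  ultimately show False using x1 by force
qed

lemma dominated_linear_graph_extension:
  assumes G: "dominated_linear_graph G" and x1: "x1 \<notin> fst ` G"
    and lower: "\<And>d a. (d, a) \<in> G \<Longrightarrow> a - norm (d - x1) \<le> \<xi>"
    and upper: "\<And>e b. (e, b) \<in> G \<Longrightarrow> \<xi> \<le> norm (e + x1) - b"
  shows "dominated_linear_graph {(d + t *\<^sub>R x1, a + t * \<xi>) | d a t. (d, a) \<in> G}"
  unfolding dominated_linear_graph_def
proof (intro conjI allI impI; elim CollectE exE conjE)
  fix x a b d1 a1 t1 d2 a2 t2
  assume 1: "(x, a) = (d1 + t1 *\<^sub>R x1, a1 + t1 * \<xi>)" "(d1, a1) \<in> G"
    and 2: "(x, b) = (d2 + t2 *\<^sub>R x1, a2 + t2 * \<xi>)" "(d2, a2) \<in> G"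
  have "t1 = t2"
    using dominated_linear_graph_coeff_unique[OF G x1 1(2) 2(2)] 1(1) 2(1) by simp
  with 1 2 G show "a = b" by (auto dest: dominated_linear_graph_unique)
next
  fix x y a b d1 a1 t1 d2 a2 t2
  assume 1: "(x, a) = (d1 + t1 *\<^sub>R x1, a1 + t1 * \<xi>)" "(d1, a1) \<in> G"
    and 2: "(y, b) = (d2 + t2 *\<^sub>R x1, a2 + t2 * \<xi>)" "(d2, a2) \<in> G"
  have "(x + y, a + b) = ((d1 + d2) + (t1 + t2) *\<^sub>R x1, (a1 + a2) + (t1 + t2) * \<xi>)"
    using 1 2 by (simp add: algebra_simps)
  with G 1(2) 2(2) show "(x + y, a + b) \<in> {(d + t *\<^sub>R x1, a + t * \<xi>) | d a t. (d, a) \<in> G}"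
    by (blast intro: dominated_linear_graph_add)
next
  fix x a c d1 a1 t1
  assume 1: "(x, a) = (d1 + t1 *\<^sub>R x1, a1 + t1 * \<xi>)" "(d1, a1) \<in> G"
  have "(c *\<^sub>R x, c * a) = (c *\<^sub>R d1 + (c * t1) *\<^sub>R x1, c * a1 + (c * t1) * \<xi>)"
    using 1 by (simp add: algebra_simps)
  with G 1(2) show "(c *\<^sub>R x, c * a) \<in> {(d + t *\<^sub>R x1, a + t * \<xi>) | d a t. (d, a) \<in> G}"
    by (blast intro: dominated_linear_graph_scaleR)
next
  fix x a d1 a1 t1
  assume "(x, a) = (d1 + t1 *\<^sub>R x1, a1 + t1 * \<xi>)" "(d1, a1) \<in> G"
  then show "a \<le> norm x"
    using dominated_linear_graph_extension_le_norm[OF G _ lower upper] by auto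
qed

lemma dominated_linear_graph_extend:
  assumes G: "dominated_linear_graph G" and G0: "(0, 0) \<in> G" and x1: "x1 \<notin> fst ` G"
  shows "\<exists>G'. dominated_linear_graph G' \<and> G \<subset> G'"
proof -
  define L where "L = {a - norm (d - x1) | d a. (d, a) \<in> G}"
  have compatible: "a - norm (d - x1) \<le> norm (e + x1) - b" if "(d, a) \<in> G" "(e, b) \<in> G" for d a e b
  proof -
    have "a + b \<le> norm ((d - x1) + (e + x1))"
      using G that by (simp add: dominated_linear_graph_le_norm dominated_linear_graph_add)
    also have "\<dots> \<le> norm (d - x1) + norm (e + x1)" by (rule norm_triangle_ineq)
    finally show ?thesis by simp
  qed
  have ne: "L \<noteq> {}" using G0 unfolding L_def by blast
  have bdd: "bdd_above L" unfolding L_def bdd_above_def using compatible[OF _ G0] by fastforce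
  have lower: "a - norm (d - x1) \<le> Sup L" if "(d, a) \<in> G" for d a
    by (rule cSup_upper[OF _ bdd]) (use that L_def in blast)
  have upper: "Sup L \<le> norm (e + x1) - b" if "(e, b) \<in> G" for e b
    by (rule cSup_least[OF ne]) (use that compatible L_def in blast)
  define G' where "G' = {(d + t *\<^sub>R x1, a + t * Sup L) | d a t. (d, a) \<in> G}"
  have "G \<subseteq> G'" unfolding G'_def by (force intro: exI[of _ 0])
  moreover have "(x1, Sup L) \<in> G'" unfolding G'_def using G0 by (force intro: exI[of _ 1])
  ultimately have "G \<subset> G'" using x1 by force
  then show ?thesis
    using dominated_linear_graph_extension[OF G x1 lower upper] unfolding G'_def by blast
qed

lemma dominated_linear_graph_chain_Union:
  assumes "chain\<^sub>\<subseteq> C" "\<And>G. G \<in> C \<Longrightarrow> dominated_linear_graph G"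
  shows "dominated_linear_graph (\<Union>C)"
proof -
  have common: "\<exists>G\<in>C. (x, a) \<in> G \<and> (y, b) \<in> G" if "(x, a) \<in> \<Union>C" "(y, b) \<in> \<Union>C" for x a y b
    using that assms(1) unfolding chain_subset_def by blast
  show ?thesis
    unfolding dominated_linear_graph_def
  proof (intro conjI allI impI)
    fix x a b assume "(x, a) \<in> \<Union>C" "(x, b) \<in> \<Union>C"
    then show "a = b" using common assms(2) dominated_linear_graph_unique by metis
  next
    fix x y a b assume "(x, a) \<in> \<Union>C" "(y, b) \<in> \<Union>C"
    then show "(x + y, a + b) \<in> \<Union>C" using common assms(2) dominated_linear_graph_add by blast
  qed (use assms(2) dominated_linear_graph_scaleR dominated_linear_graph_le_norm in blast)+
qed

lemma dominated_linear_graph_line: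
  "dominated_linear_graph {(t *\<^sub>R x0, t * norm x0) | t. True}"
  unfolding dominated_linear_graph_def
proof (intro conjI allI impI; elim CollectE exE conjE)
  fix x a b s t assume "(x, a) = (s *\<^sub>R x0, s * norm x0)" "(x, b) = (t *\<^sub>R x0, t * norm x0)"
  then show "a = b" by (cases "x0 = 0") auto
next
  fix x y a b s t assume "(x, a) = (s *\<^sub>R x0, s * norm x0)" "(y, b) = (t *\<^sub>R x0, t * norm x0)"
  then show "(x + y, a + b) \<in> {(t *\<^sub>R x0, t * norm x0) | t. True}"
    by (intro CollectI exI[of _ "s + t"]) (simp add: algebra_simps)
next
  fix x a c s assume "(x, a) = (s *\<^sub>R x0, s * norm x0)"
  then show "(c *\<^sub>R x, c * a) \<in> {(t *\<^sub>R x0, t * norm x0) | t. True}"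
    by (intro CollectI exI[of _ "c * s"]) simp
next
  fix x a s assume "(x, a) = (s *\<^sub>R x0, s * norm x0)"
  then show "a \<le> norm x" by (simp add: mult_right_mono)
qed

lemma total_dominated_linear_graph_exists:
  assumes "dominated_linear_graph G0" "(0, 0) \<in> G0"
  obtains M where "dominated_linear_graph M" "G0 \<subseteq> M" "\<And>x. x \<in> fst ` M"
proof -
  define A where "A = {G. dominated_linear_graph G \<and> G0 \<subseteq> G}"
  have "\<exists>M\<in>A. \<forall>G\<in>A. M \<subseteq> G \<longrightarrow> G = M"
  proof (rule Zorn_Lemma2, intro ballI)
    fix C assume "C \<in> chains A"
    then have "chain\<^sub>\<subseteq> C" "C \<subseteq> A" by (auto simp: chains_def)
    then have "dominated_linear_graph (\<Union>C)"
      by (intro dominated_linear_graph_chain_Union) (auto simp: A_def)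
    then have "\<Union>C \<in> A" if "C \<noteq> {}" using that \<open>C \<subseteq> A\<close> by (auto simp: A_def)
    moreover have "G0 \<in> A" using assms(1) by (simp add: A_def)
    ultimately show "\<exists>U\<in>A. \<forall>G\<in>C. G \<subseteq> U" by (cases "C = {}") auto
  qed
  then obtain M where "M \<in> A" and maximal: "\<And>G. G \<in> A \<Longrightarrow> M \<subseteq> G \<Longrightarrow> G = M" by blast
  then have M: "dominated_linear_graph M" and G0M: "G0 \<subseteq> M" by (auto simp: A_def)
  have "(0, 0) \<in> M" using G0M assms(2) by blast
  have "x \<in> fst ` M" for x
  proof (rule ccontr)
    assume "x \<notin> fst ` M"
    then obtain G where "dominated_linear_graph G" "M \<subset> G"
      using dominated_linear_graph_extend[OF M \<open>(0, 0) \<in> M\<close>] by blast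
    with maximal[of G] G0M show False unfolding A_def by blast
  qed
  with M G0M show ?thesis using that by blast
qed

lemma hahn_banach_norming_functional:
  fixes x0 :: "'a::real_normed_vector"
  obtains h :: "'a \<Rightarrow> real" where "linear h" "\<And>x. \<bar>h x\<bar> \<le> norm x" "h x0 = norm x0"
proof -
  define G0 where "G0 = {(t *\<^sub>R x0, t * norm x0) | t. True}"
  have "dominated_linear_graph G0" unfolding G0_def by (rule dominated_linear_graph_line)
  moreover have "(0, 0) \<in> G0" unfolding G0_def by (force intro: exI[of _ 0])
  ultimately obtain M where M: "dominated_linear_graph M" and G0M: "G0 \<subseteq> M"
    and total: "\<And>x. x \<in> fst ` M"
    using total_dominated_linear_graph_exists by blast
  define h where "h x = (THE a. (x, a) \<in> M)" for x
  have h_eq: "h x = a" if "(x, a) \<in> M" for x a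
    unfolding h_def using that dominated_linear_graph_unique[OF M] by blast
  have hM: "(x, h x) \<in> M" for x
    using total[of x] h_eq by force
  show ?thesis
  proof
    show "linear h"
    proof (rule linearI)
      show "h (x + y) = h x + h y" for x y
        by (rule h_eq[OF dominated_linear_graph_add[OF M hM hM]])
      show "h (c *\<^sub>R x) = c *\<^sub>R h x" for c x
        using h_eq[OF dominated_linear_graph_scaleR[OF M hM]] by simp
    qed
    show "\<bar>h x\<bar> \<le> norm x" for x
      using dominated_linear_graph_le_norm[OF M hM[of x]]
        dominated_linear_graph_le_norm[OF M dominated_linear_graph_scaleR[OF M hM[of x], of "-1"]]
      by simp
    have "(1 *\<^sub>R x0, 1 * norm x0) \<in> G0" unfolding G0_def by blast
    then show "h x0 = norm x0" using G0M h_eq by auto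
  qed
qed

lemma cscale_zero_right [simp]: "cscale c (0 :: 'a::cbanach_algebra) = 0"
  using norm_cscale[of c "0 :: 'a"] by simp

lemma cscale_scaleR: "cscale c (r *\<^sub>R x) = r *\<^sub>R cscale c (x :: 'a::cbanach_algebra)"
  by (metis cscale_cscale cscale_of_real mult.commute)

lemma cscale_i_i: "cscale \<i> (cscale \<i> x) = - (x :: 'a::cbanach_algebra)"
  using cscale_of_real[of "-1" x] by (simp add: cscale_cscale)

lemma cscale_eq_Re_Im: "cscale c x = Re c *\<^sub>R x + Im c *\<^sub>R cscale \<i> (x :: 'a::cbanach_algebra)"
proof -
  have "cscale c x = cscale (complex_of_real (Re c) + \<i> * complex_of_real (Im c)) x"
    using complex_eq[of c] by simp
  then show ?thesis by (simp add: cscale_add_left cscale_cscale[symmetric] cscale_of_real cscale_scaleR)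
qed

lemma bounded_linear_cscale: "bounded_linear (cscale c :: 'a::cbanach_algebra \<Rightarrow> 'a)"
  by (rule bounded_linear_intro[of _ "cmod c"])
     (auto simp: cscale_add_right cscale_scaleR norm_cscale mult.commute)

lemma norming_c_functional:
  fixes y :: "'a::cbanach_algebra"
  obtains g where "c_functional g" "bounded_linear g" "Re (g y) = norm y"
proof -
  obtain h :: "'a \<Rightarrow> real" where h: "linear h" and h_le: "\<And>x. \<bar>h x\<bar> \<le> norm x"
    and hy: "h y = norm y"
    using hahn_banach_norming_functional[of y] by blast
  define g where "g x = complex_of_real (h x) - \<i> * complex_of_real (h (cscale \<i> x))" for x
  have g_add: "g (x + z) = g x + g z" for x z
    by (simp add: g_def linear_add[OF h] cscale_add_right algebra_simps)
  have g_scaleR: "g (r *\<^sub>R x) = r *\<^sub>R g x" for r x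
    by (simp add: g_def linear_scale[OF h] cscale_scaleR scaleR_conv_of_real algebra_simps)
  have g_i: "g (cscale \<i> x) = \<i> * g x" for x
    by (simp add: g_def cscale_i_i linear_neg[OF h] algebra_simps)
  have "g (cscale c x) = c * g x" for c x
  proof -
    have "g (cscale c x) = Re c *\<^sub>R g x + Im c *\<^sub>R (\<i> * g x)"
      by (subst cscale_eq_Re_Im) (simp only: g_add g_scaleR g_i)
    also have "\<dots> = (complex_of_real (Re c) + \<i> * complex_of_real (Im c)) * g x"
      by (simp add: scaleR_conv_of_real algebra_simps)
    finally show ?thesis using complex_eq[of c] by simp
  qed
  then have "c_functional g" unfolding c_functional_def using g_add by auto
  moreover have "cmod (g x) \<le> norm x * 2" for x
  proof -
    have "cmod (g x) \<le> \<bar>h x\<bar> + \<bar>h (cscale \<i> x)\<bar>"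
      unfolding g_def using norm_triangle_ineq4 by (metis norm_ii norm_mult norm_of_real mult_1)
    also have "\<dots> \<le> norm x + norm (cscale \<i> x)" using h_le by (intro add_mono)
    finally show ?thesis by (simp add: norm_cscale)
  qed
  then have "bounded_linear g" using g_add g_scaleR by (intro bounded_linear_intro)
  moreover have "Re (g y) = norm y" by (simp add: g_def hy)
  ultimately show ?thesis using that by blast
qed

section \<open>The projective tensor product\<close>

lemma bbil_additive_left: "bbil \<phi> \<Longrightarrow> Modules.additive (\<lambda>x. \<phi> x y)"
  unfolding bbil_def c_functional_def by (simp add: Modules.additive.intro)

lemma bbil_zero_left: "bbil \<phi> \<Longrightarrow> \<phi> 0 y = 0"
  using Modules.additive.zero[OF bbil_additive_left] .

lemma bbil_minus_left: "bbil \<phi> \<Longrightarrow> \<phi> (- x) y = - \<phi> x y"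
  using Modules.additive.minus[OF bbil_additive_left] .

lemma bbil_cscale_left: "bbil \<phi> \<Longrightarrow> \<phi> (cscale c x) y = c * \<phi> x y"
  unfolding bbil_def c_functional_def by blast

lemma bbil_cscale_right: "bbil \<phi> \<Longrightarrow> \<phi> x (cscale c y) = c * \<phi> x y"
  unfolding bbil_def c_functional_def by blast

lemma bbil_bounded:
  assumes "bbil \<phi>"
  obtains K where "K > 0" "\<And>x y. cmod (\<phi> x y) \<le> K * (norm x * norm y)"
proof -
  obtain K where K: "\<And>x y. cmod (\<phi> x y) \<le> K * norm x * norm y"
    using assms unfolding bbil_def by blast
  have "cmod (\<phi> x y) \<le> (\<bar>K\<bar> + 1) * (norm x * norm y)" for x y
  proof -
    have "K * norm x * norm y \<le> (\<bar>K\<bar> + 1) * (norm x * norm y)"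
      by (simp add: mult.assoc mult_right_mono)
    with K[of x y] show ?thesis by linarith
  qed
  then show ?thesis using that[of "\<bar>K\<bar> + 1"] by simp
qed

abbreviation trep_norm :: "(nat \<Rightarrow> 'c::real_normed_vector \<times> 'c) \<Rightarrow> real" where
  "trep_norm u \<equiv> \<Sum>n. norm (fst (u n)) * norm (snd (u n))"

lemma
  assumes "bbil \<phi>" "trep u"
  shows summable_norm_bbil_trep: "summable (\<lambda>n. cmod (\<phi> (fst (u n)) (snd (u n))))"
    and summable_bbil_trep: "summable (\<lambda>n. \<phi> (fst (u n)) (snd (u n)))"
proof -
  obtain K where K: "\<And>x y. cmod (\<phi> x y) \<le> K * (norm x * norm y)"
    using bbil_bounded[OF assms(1)] by blast
  have "summable (\<lambda>n. K * (norm (fst (u n)) * norm (snd (u n))))"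
    using assms(2) unfolding trep_def by (rule summable_mult)
  then show "summable (\<lambda>n. cmod (\<phi> (fst (u n)) (snd (u n))))"
    by (rule summable_comparison_test') (simp add: K)
  then show "summable (\<lambda>n. \<phi> (fst (u n)) (snd (u n)))" by (rule summable_norm_cancel)
qed

lemma norm_tau_le:
  assumes "bbil \<phi>" "\<And>x y. cmod (\<phi> x y) \<le> K * (norm x * norm y)" "trep u"
  shows "cmod (tau u \<phi>) \<le> K * trep_norm u"
proof -
  have "cmod (tau u \<phi>) \<le> (\<Sum>n. cmod (\<phi> (fst (u n)) (snd (u n))))"
    using assms(1) summable_norm[OF summable_norm_bbil_trep[OF assms(1,3)]] by (simp add: tau_def)
  also have "\<dots> \<le> (\<Sum>n. K * (norm (fst (u n)) * norm (snd (u n))))"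
    using summable_norm_bbil_trep[OF assms(1,3)] summable_mult[OF assms(3)[unfolded trep_def]]
    by (rule suminf_le[rotated]) (rule assms(2))
  also have "\<dots> = K * trep_norm u"
    using assms(3) unfolding trep_def by (rule suminf_mult)
  finally show ?thesis .
qed

lemma
  fixes u :: "nat \<Rightarrow> 'c::cbanach_algebra \<times> 'c"
  assumes "trep u"
  shows summable_tomega: "summable (\<lambda>n. fst (u n) * snd (u n))"
    and norm_tomega_le: "norm (tomega u) \<le> trep_norm u"
proof -
  have abs_summable: "summable (\<lambda>n. norm (fst (u n) * snd (u n)))"
    using assms unfolding trep_def by (rule summable_comparison_test') (simp add: norm_mult_ineq)
  then show "summable (\<lambda>n. fst (u n) * snd (u n))" by (rule summable_norm_cancel)
  have "norm (tomega u) \<le> (\<Sum>n. norm (fst (u n) * snd (u n)))"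
    unfolding tomega_def using abs_summable by (rule summable_norm)
  also have "\<dots> \<le> trep_norm u"
    using abs_summable assms[unfolded trep_def] by (rule suminf_le[rotated]) (simp add: norm_mult_ineq)
  finally show "norm (tomega u) \<le> trep_norm u" .
qed

definition interleave :: "(nat \<Rightarrow> 'a) \<Rightarrow> (nat \<Rightarrow> 'a) \<Rightarrow> nat \<Rightarrow> 'a" where
  "interleave f g n = (if even n then f (n div 2) else g (n div 2))"

lemma sum_interleave:
  fixes f g :: "nat \<Rightarrow> 'a::comm_monoid_add"
  shows "sum (interleave f g) {..<n} = sum f {..<(n + 1) div 2} + sum g {..<n div 2}"
proof (induction n)
  case (Suc n)
  show ?case
  proof (cases "even n")
    case True
    then have "(Suc n + 1) div 2 = Suc (n div 2)" "Suc n div 2 = n div 2" "(n + 1) div 2 = n div 2"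
      by presburger+
    with True Suc.IH show ?thesis by (simp add: interleave_def ac_simps)
  next
    case False
    then have "(Suc n + 1) div 2 = (n + 1) div 2" "Suc n div 2 = Suc (n div 2)"
      by presburger+
    with False Suc.IH show ?thesis by (simp add: interleave_def ac_simps)
  qed
qed simp

lemma sums_interleave:
  fixes f g :: "nat \<Rightarrow> 'a::real_normed_vector"
  assumes "f sums a" "g sums b"
  shows "interleave f g sums (a + b)"
proof -
  have half: "filterlim (\<lambda>n::nat. (n + k) div 2) at_top sequentially" for k
    unfolding filterlim_at_top eventually_sequentially
  proof
    show "\<exists>N. \<forall>n\<ge>N. Z \<le> (n + k) div 2" for Z by (rule exI[of _ "2 * Z"]) presburger
  qed
  show ?thesis
    unfolding sums_def sum_interleave
    using tendsto_add[OF filterlim_compose[OF assms(1)[unfolded sums_def] half[of 1]]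
        filterlim_compose[OF assms(2)[unfolded sums_def] half[of 0]]]
    by simp
qed

lemma trep_tdiff:
  fixes v w :: "nat \<Rightarrow> 'c::cbanach_algebra \<times> 'c"
  assumes v: "trep v" and w: "trep w"
  obtains z where "trep z" "tau z = tdiff (tau v) (tau w)"
proof
  define w' where "w' n = (- fst (w n), snd (w n))" for n
  define z where "z = interleave v w'"
  have norms: "(\<lambda>n. norm (fst (z n)) * norm (snd (z n))) =
      interleave (\<lambda>n. norm (fst (v n)) * norm (snd (v n))) (\<lambda>n. norm (fst (w n)) * norm (snd (w n)))"
    by (auto simp: z_def w'_def interleave_def fun_eq_iff)
  show "trep z"
    unfolding trep_def norms
    by (rule sums_summable[OF sums_interleave[OF summable_sums summable_sums]])
       (use v w in \<open>simp_all add: trep_def\<close>)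
  show "tau z = tdiff (tau v) (tau w)"
  proof
    fix \<phi> :: "'c \<Rightarrow> 'c \<Rightarrow> complex"
    show "tau z \<phi> = tdiff (tau v) (tau w) \<phi>"
    proof (cases "bbil \<phi>")
      case True
      have "(\<lambda>n. \<phi> (fst (z n)) (snd (z n))) =
          interleave (\<lambda>n. \<phi> (fst (v n)) (snd (v n))) (\<lambda>n. - \<phi> (fst (w n)) (snd (w n)))"
        by (auto simp: z_def w'_def interleave_def fun_eq_iff bbil_minus_left[OF True])
      moreover have "\<dots> sums (tau v \<phi> + - tau w \<phi>)"
        using sums_interleave[OF summable_sums[OF summable_bbil_trep[OF True v]]
            sums_minus[OF summable_sums[OF summable_bbil_trep[OF True w]]]]
        by (simp add: tau_def True)
      ultimately show ?thesis by (simp add: tau_def tdiff_def sums_iff True)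
    qed (simp add: tau_def tdiff_def)
  qed
qed

lemma bbil_mult_functional:
  assumes "c_functional g" "bounded_linear g"
  shows "bbil (\<lambda>a b. g (a * b))"
proof -
  obtain K where "K \<ge> 0" and K: "\<And>x. norm (g x) \<le> norm x * K"
    using bounded_linear.nonneg_bounded[OF assms(2)] by blast
  then have "cmod (g (x * y)) \<le> K * norm x * norm y" for x y
    using order_trans[OF K[of "x * y"] mult_right_mono[OF norm_mult_ineq[of x y] \<open>K \<ge> 0\<close>]]
    by (simp add: ac_simps)
  moreover have "g ((x + x') * y) = g (x * y) + g (x' * y)" "g (x * (y + y')) = g (x * y) + g (x * y')"
    "g (cscale c x * y) = c * g (x * y)" "g (x * cscale c y) = c * g (x * y)" for x x' y y' c
    using assms(1) unfolding c_functional_def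
    by (simp_all add: distrib_left distrib_right mult_cscale_left mult_cscale_right)
  ultimately show ?thesis unfolding bbil_def c_functional_def by blast
qed

lemma tau_mult_functional:
  assumes "c_functional g" "bounded_linear g" "trep u"
  shows "tau u (\<lambda>a b. g (a * b)) = g (tomega u)"
  using bbil_mult_functional[OF assms(1,2)] bounded_linear.suminf[OF assms(2) summable_tomega[OF assms(3)]]
  by (simp add: tau_def tomega_def)

lemma tomega_tdiff:
  fixes v w z :: "nat \<Rightarrow> 'c::cbanach_algebra \<times> 'c"
  assumes "trep z" "trep v" "trep w" "tau z = tdiff (tau v) (tau w)"
  shows "tomega z = tomega v - tomega w"
proof -
  define y where "y = tomega z - (tomega v - tomega w)"
  obtain g where g: "c_functional g" "bounded_linear g" and gy: "Re (g y) = norm y"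
    using norming_c_functional .
  have "g (tomega z) = g (tomega v) - g (tomega w)"
    using fun_cong[OF assms(4), of "\<lambda>a b. g (a * b)"]
    by (simp add: tdiff_def tau_mult_functional[OF g] assms(1-3))
  then have "g y = 0" by (simp add: y_def linear_diff[OF bounded_linear.linear[OF g(2)]])
  then show ?thesis using gy by (simp add: y_def)
qed

lemma norm_tomega_diff_le_projnorm:
  fixes v w :: "nat \<Rightarrow> 'c::cbanach_algebra \<times> 'c"
  assumes v: "trep v" and w: "trep w"
  shows "norm (tomega v - tomega w) \<le> projnorm (tdiff (tau v) (tau w))"
  unfolding projnorm_def
proof (rule cInf_greatest)
  show "{trep_norm u | u. trep u \<and> tau u = tdiff (tau v) (tau w)} \<noteq> {}"
    using trep_tdiff[OF v w] by blast
  fix s assume "s \<in> {trep_norm u | u. trep u \<and> tau u = tdiff (tau v) (tau w)}"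
  then obtain z where "trep z" "tau z = tdiff (tau v) (tau w)" "s = trep_norm z" by blast
  then show "norm (tomega v - tomega w) \<le> s"
    using norm_tomega_le[of z] tomega_tdiff[OF _ v w] by simp
qed

lemma trep_tlmul:
  assumes "trep u" shows "trep (tlmul c u)"
  unfolding trep_def tlmul_def fst_conv snd_conv
proof (rule summable_comparison_test'[OF summable_mult[OF assms[unfolded trep_def], of "norm c"]])
  fix n
  have "norm (c * fst (u n)) * norm (snd (u n)) \<le> norm c * norm (fst (u n)) * norm (snd (u n))"
    by (intro mult_right_mono norm_mult_ineq) simp
  then show "norm (norm (c * fst (u n)) * norm (snd (u n))) \<le> norm c * (norm (fst (u n)) * norm (snd (u n)))"
    by (simp add: mult.assoc)
qed

lemma trep_trmul:
  assumes "trep u" shows "trep (trmul u c)"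
  unfolding trep_def trmul_def fst_conv snd_conv
proof (rule summable_comparison_test'[OF summable_mult[OF assms[unfolded trep_def], of "norm c"]])
  fix n
  have "norm (fst (u n)) * norm (snd (u n) * c) \<le> norm (fst (u n)) * (norm (snd (u n)) * norm c)"
    by (intro mult_left_mono norm_mult_ineq) simp
  then show "norm (norm (fst (u n)) * norm (snd (u n) * c)) \<le> norm c * (norm (fst (u n)) * norm (snd (u n)))"
    by (simp add: ac_simps)
qed

lemma tomega_tlmul: "trep u \<Longrightarrow> tomega (tlmul c u) = c * tomega u"
  unfolding tomega_def tlmul_def by (simp add: mult.assoc suminf_mult[OF summable_tomega])

lemma tomega_trmul: "trep u \<Longrightarrow> tomega (trmul u c) = tomega u * c"
  unfolding tomega_def trmul_def by (simp add: mult.assoc[symmetric] suminf_mult2[OF summable_tomega])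

lemma norm_commutator_tomega_le:
  assumes "trep u"
  shows "norm (c * tomega u - tomega u * c) \<le> projnorm (tdiff (tau (tlmul c u)) (tau (trmul u c)))"
  using norm_tomega_diff_le_projnorm[OF trep_tlmul trep_trmul, OF assms assms]
  by (simp add: tomega_tlmul tomega_trmul assms)

definition tzero :: "'c::cbanach_algebra tensor" where
  "tzero = (\<lambda>\<phi>. 0)"

lemma tau_tsingle: "tau (tsingle x y) = (\<lambda>\<phi>. if bbil \<phi> then \<phi> x y else 0)"
proof
  fix \<phi> :: "'a \<Rightarrow> 'a \<Rightarrow> complex"
  show "tau (tsingle x y) \<phi> = (if bbil \<phi> then \<phi> x y else 0)"
  proof (cases "bbil \<phi>")
    case True
    have "(\<lambda>n. \<phi> (fst (tsingle x y n)) (snd (tsingle x y n))) = (\<lambda>n. if n = 0 then \<phi> x y else 0)"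
      by (simp add: tsingle_def fun_eq_iff bbil_zero_left[OF True])
    then show ?thesis using True sums_single[of 0 "\<lambda>_. \<phi> x y"] by (simp add: tau_def sums_iff)
  qed (simp add: tau_def)
qed

lemma tzero_in_tensor_set: "(tzero :: 'c::cbanach_algebra tensor) \<in> tensor_set"
proof -
  have "trep (\<lambda>n. (0 :: 'c, 0 :: 'c))" "tau (\<lambda>n. (0 :: 'c, 0 :: 'c)) = tzero"
    by (simp_all add: trep_def tau_def tzero_def fun_eq_iff bbil_zero_left)
  then show ?thesis unfolding tensor_set_def by force
qed

lemma norm_pairing_le_projnorm:
  assumes t: "t \<in> tensor_set" and "bbil \<phi>" "K > 0"
    and K: "\<And>x y. cmod (\<phi> x y) \<le> K * (norm x * norm y)"
  shows "cmod (t \<phi>) \<le> K * projnorm t"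
proof -
  have "cmod (t \<phi>) / K \<le> projnorm t"
    unfolding projnorm_def
  proof (rule cInf_greatest)
    show "{trep_norm u | u. trep u \<and> tau u = t} \<noteq> {}" using t unfolding tensor_set_def by blast
    fix s assume "s \<in> {trep_norm u | u. trep u \<and> tau u = t}"
    then obtain z where z: "trep z" "tau z = t" "s = trep_norm z" by blast
    then have "cmod (t \<phi>) \<le> s * K"
      using norm_tau_le[OF \<open>bbil \<phi>\<close> K z(1)] by (simp add: mult.commute)
    then show "cmod (t \<phi>) / K \<le> s" by (simp add: pos_divide_le_eq[OF \<open>K > 0\<close>])
  qed
  then show ?thesis using \<open>K > 0\<close> by (simp add: pos_divide_le_eq mult.commute)
qed

lemma tensor_eq_tzero_if_projnorm_small:
  fixes t :: "'c::cbanach_algebra tensor"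
  assumes t: "t \<in> tensor_set" and small: "\<And>\<epsilon>. \<epsilon> > 0 \<Longrightarrow> projnorm t < \<epsilon>"
  shows "t = tzero"
proof
  fix \<phi>
  have "projnorm t \<le> 0" using small[of "projnorm t"] by (cases "projnorm t > 0") auto
  show "t \<phi> = tzero \<phi>"
  proof (cases "bbil \<phi>")
    case True
    obtain K where "K > 0" "\<And>x y. cmod (\<phi> x y) \<le> K * (norm x * norm y)"
      using bbil_bounded[OF True] by blast
    then have "cmod (t \<phi>) \<le> K * projnorm t" by (rule norm_pairing_le_projnorm[OF t True])
    also have "\<dots> \<le> 0" using \<open>K > 0\<close> \<open>projnorm t \<le> 0\<close> by (simp add: mult_nonneg_nonpos)
    finally show ?thesis by (simp add: tzero_def)
  qed (use t in \<open>auto simp: tensor_set_def tau_def tzero_def\<close>)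
qed

lemma closed_tsubspace_tzero: "closed_tsubspace {tzero :: 'c::cbanach_algebra tensor}"
  unfolding closed_tsubspace_def
proof (intro conjI ballI allI impI)
  fix t :: "'c tensor"
  assume "t \<in> tensor_set" "\<forall>\<epsilon>>0. \<exists>m\<in>{tzero}. projnorm (tdiff t m) < \<epsilon>"
  moreover have "tdiff t tzero = t" by (simp add: tdiff_def tzero_def)
  ultimately show "t \<in> {tzero}" using tensor_eq_tzero_if_projnorm_small by auto
qed (simp_all add: tzero_def tzero_in_tensor_set[unfolded tzero_def])

lemma closed_tspan_eq_tzero:
  assumes "S \<subseteq> {tzero :: 'c::cbanach_algebra tensor}"
  shows "closed_tspan S = {tzero}"
proof -
  have "tzero \<in> M" if "closed_tsubspace M" for M :: "'c tensor set"
    using that by (simp add: closed_tsubspace_def tzero_def)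
  then show ?thesis
    using assms closed_tsubspace_tzero unfolding closed_tspan_def by blast
qed

lemma tqnorm_tzero: "tqnorm {tzero} t = projnorm t"
  by (simp add: tqnorm_def tdiff_def tzero_def)

section \<open>Scalar module actions\<close>

lemma eq_cscale_if_right_bai:
  fixes x y :: "'c::cbanach_algebra"
  assumes "has_right_bai TYPE('c)" "\<And>e. x * e = cscale s (y * e)"
  shows "x = cscale s y"
proof -
  obtain F :: "'c filter" where "F \<noteq> bot" and F: "\<And>z. ((\<lambda>e. z * e) \<longlongrightarrow> z) F"
    using assms(1) unfolding has_right_bai_def by blast
  moreover have "((\<lambda>e. x * e) \<longlongrightarrow> cscale s y) F"
    unfolding assms(2) by (rule bounded_linear.tendsto[OF bounded_linear_cscale F])
  ultimately show ?thesis using tendsto_unique by blast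
qed

lemma quotient_actions_scalar:
  fixes la :: "'m::cbanach_algebra \<Rightarrow> 'a::cbanach_algebra \<Rightarrow> 'a"
    and q :: "'a \<Rightarrow> 'c::cbanach_algebra"
  assumes "acts_trivially_left la"
    and q: "quotient_by (module_ideal la ra) q"
    and la_q: "\<forall>\<alpha> a. laC \<alpha> (q a) = q (la \<alpha> a)"
    and ra_q: "\<forall>a \<alpha>. raC (q a) \<alpha> = q (ra a \<alpha>)"
    and "has_right_bai TYPE('c)"
  obtains f where "\<And>\<alpha> c. laC \<alpha> c = cscale (f \<alpha>) c" "\<And>\<alpha> c. raC c \<alpha> = cscale (f \<alpha>) c"
proof -
  obtain f where la: "\<And>\<alpha> a. la \<alpha> a = cscale (f \<alpha>) a"
    using assms(1) unfolding acts_trivially_left_def by blast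
  have q_add: "q (x + y) = q x + q y" and q_cscale: "q (cscale c x) = cscale c (q x)"
    and q_mult: "q (x * y) = q x * q y" and q_surj: "surj q"
    and q_norm: "norm (q x) = infdist x (module_ideal la ra)" for x y c
    using q unfolding quotient_by_def c_linear_def by auto
  have "ra a \<alpha> * b - a * la \<alpha> b \<in> module_ideal la ra" for a b \<alpha>
    unfolding module_ideal_def gen_closed_ideal_def by blast
  then have "norm (q (ra a \<alpha> * b - a * la \<alpha> b)) = 0" for a b \<alpha>
    using q_norm by simp
  then have q_rel: "q (ra a \<alpha> * b) = q (a * la \<alpha> b)" for a b \<alpha>
    using Modules.additive.diff[of q] q_add by (simp add: Modules.additive.intro)
  have "laC \<alpha> c = cscale (f \<alpha>) c" for \<alpha> c
    using q_surj la_q by (metis la q_cscale surj_def)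
  moreover have "raC c \<alpha> = cscale (f \<alpha>) c" for \<alpha> c
  proof (rule eq_cscale_if_right_bai[OF assms(5)])
    fix e
    obtain a b where "c = q a" "e = q b" using q_surj by (metis surj_def)
    then show "raC c \<alpha> * e = cscale (f \<alpha>) (c * e)"
      using q_rel[of a \<alpha> b] by (simp add: ra_q q_mult la q_cscale mult_cscale_right)
  qed
  ultimately show ?thesis using that by blast
qed

lemma module_ideal_scalar_actions:
  fixes la :: "'m::cbanach_algebra \<Rightarrow> 'c::cbanach_algebra \<Rightarrow> 'c"
  assumes "\<And>\<alpha> c. la \<alpha> c = cscale (f \<alpha>) c" "\<And>\<alpha> c. ra c \<alpha> = cscale (f \<alpha>) c"
  shows "module_ideal la ra = {0}"
proof -
  have "{ra a \<alpha> * b - a * la \<alpha> b | a b \<alpha>. True} = {0}"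
    by (auto simp: assms mult_cscale_left mult_cscale_right)
  moreover have "closed_ideal {0 :: 'c}" by (simp add: closed_ideal_def)
  ultimately show ?thesis unfolding module_ideal_def gen_closed_ideal_def by blast
qed

lemma module_pseudo_amenable_iff_of_scalar_actions:
  fixes la :: "'m::cbanach_algebra \<Rightarrow> 'c::cbanach_algebra \<Rightarrow> 'c"
  assumes la: "\<And>\<alpha> c. la \<alpha> c = cscale (f \<alpha>) c" and ra: "\<And>\<alpha> c. ra c \<alpha> = cscale (f \<alpha>) c"
  shows "module_pseudo_amenable la ra \<longleftrightarrow> pseudo_amenable TYPE('c)"
proof -
  have "tdiff (tau (tsingle (ra c \<alpha>) d)) (tau (tsingle c (la \<alpha> d))) = tzero" for c d \<alpha>
    by (simp add: fun_eq_iff tdiff_def tau_tsingle la ra tzero_def bbil_cscale_left bbil_cscale_right)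
  then have I: "closed_tspan {tdiff (tau (tsingle (ra c \<alpha>) d)) (tau (tsingle c (la \<alpha> d))) | c d \<alpha>. True}
      = {tzero}"
    by (intro closed_tspan_eq_tzero) auto
  let ?comm = "\<lambda>c u. projnorm (tdiff (tau (tlmul c u)) (tau (trmul u c)))"
  have right_unit: "((\<lambda>u. c * tomega u) \<longlongrightarrow> c) F"
    if F: "\<forall>\<^sub>F u in F. trep u" "\<And>c. (?comm c \<longlongrightarrow> 0) F" "\<And>c. ((\<lambda>u. tomega u * c) \<longlongrightarrow> c) F"
    for F :: "(nat \<Rightarrow> 'c \<times> 'c) filter" and c
  proof -
    have "\<forall>\<^sub>F u in F. norm (c * tomega u - tomega u * c) \<le> norm (?comm c u) * 1"
      using F(1) by (rule eventually_mono) (simp add: order_trans[OF norm_commutator_tomega_le])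
    then have "((\<lambda>u. c * tomega u - tomega u * c) \<longlongrightarrow> 0) F"
      by (rule tendsto_0_le[OF F(2)])
    from tendsto_add[OF this F(3)[of c]] show ?thesis by simp
  qed
  show ?thesis
    unfolding module_pseudo_amenable_def pseudo_amenable_def Let_def I tqnorm_tzero
      module_ideal_scalar_actions[OF la ra] infdist_singleton dist_norm tendsto_norm_zero_iff LIM_zero_iff
    using right_unit by blast
qed

theorem lemma3p12:
  fixes la :: "'m::cbanach_algebra \<Rightarrow> 'a::cbanach_algebra \<Rightarrow> 'a"
    and ra :: "'a \<Rightarrow> 'm \<Rightarrow> 'a"
    and q :: "'a \<Rightarrow> 'c::cbanach_algebra"
    and laC :: "'m \<Rightarrow> 'c \<Rightarrow> 'c"
    and raC :: "'c \<Rightarrow> 'm \<Rightarrow> 'c"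
  assumes "banach_module la ra"
    and "compatible_actions la ra"
    and "acts_trivially_left la"
    and "quotient_by (module_ideal la ra) q"
    and "\<forall>\<alpha> a. laC \<alpha> (q a) = q (la \<alpha> a)"
    and "\<forall>a \<alpha>. raC (q a) \<alpha> = q (ra a \<alpha>)"
    and "has_right_bai TYPE('c)"
  shows "module_pseudo_amenable laC raC \<longleftrightarrow> pseudo_amenable TYPE('c)"
proof -
  obtain f where "\<And>\<alpha> c. laC \<alpha> c = cscale (f \<alpha>) c" "\<And>\<alpha> c. raC c \<alpha> = cscale (f \<alpha>) c"
    using quotient_actions_scalar[OF assms(3-7)] by blast
  then show ?thesis by (rule module_pseudo_amenable_iff_of_scalar_actions)
qed

end
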